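(* Let $(G,V^\infty,T,k)$ be an instance of \textsc{OddMultiwayNodeCut} with $G$ a DAG. Let $M^*$ be a minimum-size solution chosen as follows: among all minimum-size solutions $S$, it maximizes $|r_G(S)\cup f_G(S)\cup S|$, and among those it maximizes $|r_G(S)|$. Then: - $M^*$ is thin; - for every node $v\in r_G(M^* )$, some important $v\rightarrow T$ separator is contained in $M^*$.
   Context: Paths are simple directed paths; a path is odd if it has an odd number of edges. An instance $(G,V^\infty,T,k)$ consists of a DAG $G$, protected nodes $V^\infty\subseteq V(G)$, terminals $T\subseteq V^\infty$ and $k\in\mathbb{Z}_+$. A $T$-path has both ends in $T$. A solution is a set $M\subseteq V(G)\setminus V^\infty$ intersecting every odd $T$-path. $\mathcal{R}_H(X)$ is the set of nodes reachable from $X$ in $H$, including $X$. The shadows are $f_G(M):=V(G\setminus M)\setminus\mathcal{R}_{G\setminus M}(T)$, and $r_G(M):=$ the set of $v\in V(G)\setminus M$ with no path to $T$ in $G\setminus M$. A set $M$ is thin if no $v\in M$ lies in $r_G(M\setminus\{v\})$. An $X\rightarrow Y$ separator is a set $S\subseteq V(G)\setminus V^\infty$ such that $G\setminus S$ has no $X$-to-$Y$ path. Separator $S'$ dominates separator $S$ if $|S'|\le|S|$ and $\mathcal{R}_{G\setminus S}(X)\subsetneq\mathcal{R}_{G\setminus S'}(X)$. An important separator is an inclusion-minimal separator dominated by no other separator. *)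

theory Defs
  imports Main
begin

text \<open>Deleting a node set M
  from G is modelled by replacing V by V - M (edges with an endpoint outside the
  vertex set can never be used by a path).\<close>

definition is_path :: "'a set \<Rightarrow> ('a \<times> 'a) set \<Rightarrow> 'a list \<Rightarrow> bool" where
  "is_path V E p \<longleftrightarrow> p \<noteq> [] \<and> distinct p \<and> set p \<subseteq> V \<and>
     (\<forall>i. Suc i < length p \<longrightarrow> (p ! i, p ! Suc i) \<in> E)"

definition path_len :: "'a list \<Rightarrow> nat" where
  "path_len p = length p - 1"

definition is_dag :: "'a set \<Rightarrow> ('a \<times> 'a) set \<Rightarrow> bool" where
  "is_dag V E \<longleftrightarrow> finite V \<and> E \<subseteq> V \<times> V \<and> acyclic E"

definition reach :: "'a set \<Rightarrow> ('a \<times> 'a) set \<Rightarrow> 'a set \<Rightarrow> 'a set" where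
  "reach V E X = {v. \<exists>p. is_path V E p \<and> hd p \<in> X \<and> last p = v}"

definition is_solution :: "'a set \<Rightarrow> ('a \<times> 'a) set \<Rightarrow> 'a set \<Rightarrow> 'a set \<Rightarrow> 'a set \<Rightarrow> bool" where
  "is_solution V E Vinf T M \<longleftrightarrow> M \<subseteq> V - Vinf \<and>
     (\<forall>p. is_path V E p \<and> hd p \<in> T \<and> last p \<in> T \<and> odd (path_len p) \<longrightarrow> set p \<inter> M \<noteq> {})"

definition is_min_solution :: "'a set \<Rightarrow> ('a \<times> 'a) set \<Rightarrow> 'a set \<Rightarrow> 'a set \<Rightarrow> 'a set \<Rightarrow> bool" where
  "is_min_solution V E Vinf T M \<longleftrightarrow> is_solution V E Vinf T M \<and>
     (\<forall>S. is_solution V E Vinf T S \<longrightarrow> card M \<le> card S)"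

definition fshadow :: "'a set \<Rightarrow> ('a \<times> 'a) set \<Rightarrow> 'a set \<Rightarrow> 'a set \<Rightarrow> 'a set" where
  "fshadow V E T M = (V - M) - reach (V - M) E T"

definition rshadow :: "'a set \<Rightarrow> ('a \<times> 'a) set \<Rightarrow> 'a set \<Rightarrow> 'a set \<Rightarrow> 'a set" where
  "rshadow V E T M = {v \<in> V - M. \<not> (\<exists>p. is_path (V - M) E p \<and> hd p = v \<and> last p \<in> T)}"

definition thin :: "'a set \<Rightarrow> ('a \<times> 'a) set \<Rightarrow> 'a set \<Rightarrow> 'a set \<Rightarrow> bool" where
  "thin V E T M \<longleftrightarrow> (\<forall>v\<in>M. v \<notin> rshadow V E T (M - {v}))"

definition is_separator :: "'a set \<Rightarrow> ('a \<times> 'a) set \<Rightarrow> 'a set \<Rightarrow> 'a set \<Rightarrow> 'a set \<Rightarrow> 'a set \<Rightarrow> bool" where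
  "is_separator V E Vinf X Y S \<longleftrightarrow> S \<subseteq> V - Vinf \<and>
     \<not> (\<exists>p. is_path (V - S) E p \<and> hd p \<in> X \<and> last p \<in> Y)"

definition dominates :: "'a set \<Rightarrow> ('a \<times> 'a) set \<Rightarrow> 'a set \<Rightarrow> 'a set \<Rightarrow> 'a set \<Rightarrow> bool" where
  "dominates V E X S' S \<longleftrightarrow> card S' \<le> card S \<and> reach (V - S) E X \<subset> reach (V - S') E X"

definition is_important_separator :: "'a set \<Rightarrow> ('a \<times> 'a) set \<Rightarrow> 'a set \<Rightarrow> 'a set \<Rightarrow> 'a set \<Rightarrow> 'a set \<Rightarrow> bool" where
  "is_important_separator V E Vinf X Y S \<longleftrightarrow> is_separator V E Vinf X Y S \<and>
     (\<forall>S0. S0 \<subset> S \<longrightarrow> \<not> is_separator V E Vinf X Y S0) \<and>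
     (\<forall>S'. is_separator V E Vinf X Y S' \<longrightarrow> \<not> dominates V E X S' S)"

end

theory Submission
  imports Defs
begin

text \<open>
  Thinness: if some \<open>w \<in> M\<^sup>*\<close> could not reach \<open>T\<close> once the rest of \<open>M\<^sup>*\<close> is deleted, then every
  odd \<open>T\<close>-path through \<open>w\<close> would still meet \<open>M\<^sup>* - {w}\<close>, contradicting minimality.

  For \<open>v\<close> in the reverse shadow, let \<open>S\<close> be the set of nodes of \<open>M\<^sup>*\<close> entered by an edge from the
  part of \<open>G - M\<^sup>*\<close> reachable from \<open>v\<close>. It is a \<open>v \<rightarrow> T\<close> separator, and an inclusion-minimal
  one because by thinness each of its nodes escapes to \<open>T\<close>. If a separator \<open>S'\<close> dominated \<open>S\<close>,
  then no node of \<open>S - S'\<close> reaches \<open>T\<close> avoiding \<open>S'\<close>, so \<open>M' = (M\<^sup>* - S) \<union> S'\<close> is again a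
  minimum solution. Every path of \<open>G - M'\<close> that ends in \<open>T\<close> avoids \<open>M\<^sup>*\<close>, hence the union of
  the shadows and the solution can only grow, while the reverse shadow gains \<open>S - S'\<close> and loses
  only nodes of \<open>S'\<close>. The escape path of a node of \<open>S - S'\<close> meets \<open>S'\<close> in a node outside
  \<open>M\<^sup>*\<close> and its reverse shadow, and this makes the reverse shadow strictly larger,
  contradicting the choice of \<open>M\<^sup>*\<close>.
\<close>

text \<open>Reachability by walks inside \<open>W\<close>: it composes, and in an acyclic graph it is the same as
  the existence of a simple path (\<open>ex_path_iff_reaches\<close>).\<close>

definition reaches :: "'a set \<Rightarrow> ('a \<times> 'a) set \<Rightarrow> 'a \<Rightarrow> 'a \<Rightarrow> bool" where
  "reaches W E a b \<longleftrightarrow> a \<in> W \<and> (a, b) \<in> (Restr E W)\<^sup>*"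

lemma reaches_in:
  assumes "reaches W E a b" shows "a \<in> W" "b \<in> W"
  using assms unfolding reaches_def by (auto elim: rtranclE)

lemma reaches_refl: "a \<in> W \<Longrightarrow> reaches W E a a"
  unfolding reaches_def by simp

lemma reaches_trans: "reaches W E a b \<Longrightarrow> reaches W E b c \<Longrightarrow> reaches W E a c"
  unfolding reaches_def by auto

lemma reaches_edge: "a \<in> W \<Longrightarrow> b \<in> W \<Longrightarrow> (a, b) \<in> E \<Longrightarrow> reaches W E a b"
  unfolding reaches_def by auto

lemma reaches_mono:
  assumes "W \<subseteq> W'" "reaches W E a b" shows "reaches W' E a b"
proof -
  have "Restr E W \<subseteq> Restr E W'" using assms(1) by auto
  then show ?thesis using assms unfolding reaches_def by (meson rtrancl_mono subsetD)
qed

lemma reaches_rtrancl: "reaches W E a b \<Longrightarrow> (a, b) \<in> E\<^sup>*"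
  unfolding reaches_def using rtrancl_mono[of "Restr E W" E] by auto

lemma is_path_mono: "is_path W E p \<Longrightarrow> set p \<subseteq> W' \<Longrightarrow> is_path W' E p"
  unfolding is_path_def by blast

lemma is_path_Cons:
  assumes "is_path W E p" "y \<in> W" "y \<notin> set p" "(y, hd p) \<in> E"
  shows "is_path W E (y # p)"
  unfolding is_path_def
proof (intro conjI allI impI)
  fix i assume "Suc i < length (y # p)"
  then show "((y # p) ! i, (y # p) ! Suc i) \<in> E"
    using assms unfolding is_path_def by (cases i) (auto simp: hd_conv_nth)
qed (use assms in \<open>auto simp: is_path_def\<close>)

lemma is_path_drop:
  assumes "is_path W E p" "i < length p"
  shows "is_path W E (drop i p)" "hd (drop i p) = p ! i" "last (drop i p) = last p"
  using assms unfolding is_path_def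
  by (simp_all add: hd_drop_conv_nth distinct_drop subset_trans[OF set_drop_subset])

lemma path_reaches_nth:
  assumes "is_path W E p" "i \<le> j" "j < length p"
  shows "reaches W E (p ! i) (p ! j)"
  using assms(2,3)
proof (induction j)
  case 0
  then show ?case using assms(1) unfolding is_path_def by (auto intro!: reaches_refl nth_mem)
next
  case (Suc j)
  show ?case
  proof (cases "i = Suc j")
    case True
    then show ?thesis
      using assms(1) Suc.prems unfolding is_path_def by (auto intro!: reaches_refl nth_mem)
  next
    case False
    then have "reaches W E (p ! i) (p ! j)" using Suc by simp
    moreover have "reaches W E (p ! j) (p ! Suc j)"
      using assms(1) Suc.prems unfolding is_path_def by (intro reaches_edge) auto
    ultimately show ?thesis by (rule reaches_trans)
  qed
qed

lemma path_reaches: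
  assumes "is_path W E p" "x \<in> set p"
  shows "reaches W E (hd p) x" "reaches W E x (last p)"
proof -
  obtain i where i: "i < length p" "x = p ! i" using assms(2) by (auto simp: in_set_conv_nth)
  have "p \<noteq> []" using assms(1) unfolding is_path_def by simp
  then have "hd p = p ! 0" "last p = p ! (length p - 1)" by (simp_all add: hd_conv_nth last_conv_nth)
  then show "reaches W E (hd p) x" "reaches W E x (last p)"
    using path_reaches_nth[OF assms(1)] i by auto
qed

lemma reaches_path:
  assumes "acyclic E" "reaches W E a b"
  shows "\<exists>p. is_path W E p \<and> hd p = a \<and> last p = b"
proof -
  have "(a, b) \<in> (Restr E W)\<^sup>*" "a \<in> W" using assms(2) unfolding reaches_def by auto
  then show ?thesis
  proof (induction rule: converse_rtrancl_induct)
    case base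
    then show ?case by (intro exI[of _ "[b]"]) (simp add: is_path_def)
  next
    case (step y y')
    then obtain p where p: "is_path W E p" "hd p = y'" "last p = b" by auto
    have "y \<notin> set p"
    proof
      assume "y \<in> set p"
      then have "(y', y) \<in> E\<^sup>*" using path_reaches(1)[OF p(1)] p(2) reaches_rtrancl by metis
      with step.hyps(1) have "(y, y) \<in> E\<^sup>+" by (meson IntD1 rtrancl_into_trancl2)
      with assms(1) show False unfolding acyclic_def by blast
    qed
    then have "is_path W E (y # p)" using p step.hyps(1) by (intro is_path_Cons) auto
    moreover have "p \<noteq> []" using p(1) unfolding is_path_def by simp
    ultimately show ?case using p(3) by (intro exI[of _ "y # p"]) simp
  qed
qed

lemma ex_path_iff_reaches:
  assumes "acyclic E"
  shows "(\<exists>p. is_path W E p \<and> hd p = a \<and> last p = b) \<longleftrightarrow> reaches W E a b"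
proof
  assume "\<exists>p. is_path W E p \<and> hd p = a \<and> last p = b"
  then obtain p where p: "is_path W E p" "hd p = a" "last p = b" by blast
  have "last p \<in> set p" using p(1) unfolding is_path_def by simp
  with path_reaches(1)[OF p(1)] p(2,3) show "reaches W E a b" by simp
qed (rule reaches_path[OF assms])

lemma reaches_subgraph:
  assumes "acyclic E" "reaches W E a b"
    and "\<And>z. reaches W E a z \<Longrightarrow> reaches W E z b \<Longrightarrow> z \<in> W'"
  shows "reaches W' E a b"
proof -
  obtain p where p: "is_path W E p" "hd p = a" "last p = b" using reaches_path[OF assms(1,2)] by blast
  have "set p \<subseteq> W'" using assms(3) path_reaches[OF p(1)] p(2,3) by blast
  then show ?thesis using ex_path_iff_reaches[OF assms(1)] is_path_mono[OF p(1)] p(2,3) by blast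
qed

lemma ex_path_to_iff_reaches:
  assumes "acyclic E"
  shows "(\<exists>p. is_path W E p \<and> hd p = a \<and> last p \<in> T) \<longleftrightarrow> (\<exists>t\<in>T. reaches W E a t)"
  by (auto simp flip: ex_path_iff_reaches[OF assms])

lemma reach_iff:
  assumes "acyclic E" shows "x \<in> reach W E X \<longleftrightarrow> (\<exists>a\<in>X. reaches W E a x)"
  unfolding reach_def by (auto simp flip: ex_path_iff_reaches[OF assms])

lemma rshadow_iff:
  assumes "acyclic E"
  shows "x \<in> rshadow V E T M \<longleftrightarrow> x \<in> V - M \<and> \<not> (\<exists>t\<in>T. reaches (V - M) E x t)"
  unfolding rshadow_def by (simp add: ex_path_to_iff_reaches[OF assms])

lemma fshadow_iff:
  assumes "acyclic E"
  shows "x \<in> fshadow V E T M \<longleftrightarrow> x \<in> V - M \<and> \<not> (\<exists>t\<in>T. reaches (V - M) E t x)"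
  unfolding fshadow_def by (auto simp: reach_iff[OF assms])

lemma is_separator_singleton_iff:
  assumes "acyclic E"
  shows "is_separator V E Vinf {v} T S \<longleftrightarrow> S \<subseteq> V - Vinf \<and> \<not> (\<exists>t\<in>T. reaches (V - S) E v t)"
  unfolding is_separator_def by (simp add: ex_path_to_iff_reaches[OF assms])

lemma solution_Diff_rshadow_node:
  assumes sol: "is_solution V E Vinf T M" and w: "w \<in> rshadow V E T (M - {w})"
  shows "is_solution V E Vinf T (M - {w})"
  unfolding is_solution_def
proof (intro conjI allI impI)
  show "M - {w} \<subseteq> V - Vinf" using sol unfolding is_solution_def by blast
  fix p assume p: "is_path V E p \<and> hd p \<in> T \<and> last p \<in> T \<and> odd (path_len p)"
  show "set p \<inter> (M - {w}) \<noteq> {}"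
  proof
    assume avoid: "set p \<inter> (M - {w}) = {}"
    with sol p have "w \<in> set p" unfolding is_solution_def by blast
    then obtain i where i: "i < length p" "p ! i = w" by (auto simp: in_set_conv_nth)
    have "set p \<subseteq> V - (M - {w})" using p avoid unfolding is_path_def by blast
    then have "is_path (V - (M - {w})) E p" using p is_path_mono by blast
    from is_path_drop[OF this i(1)] i(2) p w show False unfolding rshadow_def by auto
  qed
qed

lemma min_solution_thin:
  assumes "finite V" "is_min_solution V E Vinf T M"
  shows "thin V E T M"
  unfolding thin_def
proof (intro ballI notI)
  fix w assume "w \<in> M" "w \<in> rshadow V E T (M - {w})"
  have sol: "is_solution V E Vinf T M" using assms(2) unfolding is_min_solution_def by blast
  then have "finite M" using assms(1) finite_subset unfolding is_solution_def by blast
  then have "card (M - {w}) < card M" using \<open>w \<in> M\<close> by (rule card_Diff1_less)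
  moreover have "is_solution V E Vinf T (M - {w})"
    using solution_Diff_rshadow_node[OF sol] \<open>w \<in> rshadow V E T (M - {w})\<close> .
  ultimately show False using assms(2) leD unfolding is_min_solution_def by blast
qed

lemma thin_escape_path:
  assumes "thin V E T M" "M \<subseteq> V" "w \<in> M"
  shows "\<exists>p. is_path (V - (M - {w})) E p \<and> hd p = w \<and> last p \<in> T"
  using assms unfolding thin_def rshadow_def by blast

definition out_boundary :: "'a set \<Rightarrow> ('a \<times> 'a) set \<Rightarrow> 'a set \<Rightarrow> 'a \<Rightarrow> 'a set" where
  "out_boundary V E M v = {w \<in> M. \<exists>u. reaches (V - M) E v u \<and> (u, w) \<in> E}"

lemma out_boundary_subset: "out_boundary V E M v \<subseteq> M"
  unfolding out_boundary_def by blast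

lemma reaches_Diff_out_boundary:
  assumes "reaches (V - out_boundary V E M v) E v x" "v \<notin> M"
  shows "reaches (V - M) E v x"
proof -
  have "(v, x) \<in> (Restr E (V - out_boundary V E M v))\<^sup>*" "v \<in> V"
    using assms(1) unfolding reaches_def by auto
  then show ?thesis
  proof (induction rule: rtrancl_induct)
    case base
    then show ?case using assms(2) by (simp add: reaches_refl)
  next
    case (step y z)
    have yz: "(y, z) \<in> E" "z \<in> V" "z \<notin> out_boundary V E M v" using step.hyps(2) by auto
    have vy: "reaches (V - M) E v y" using step.IH step.prems by blast
    then have "z \<notin> M" using yz(1,3) unfolding out_boundary_def by blast
    then have "reaches (V - M) E y z" using reaches_in(2)[OF vy] yz by (blast intro: reaches_edge)
    with vy show ?case by (rule reaches_trans)
  qed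
qed

lemma out_boundary_separator:
  assumes "acyclic E" "M \<subseteq> V - Vinf" "v \<in> rshadow V E T M"
  shows "is_separator V E Vinf {v} T (out_boundary V E M v)"
proof -
  have v: "v \<notin> M" "\<not> (\<exists>t\<in>T. reaches (V - M) E v t)"
    using assms(3) by (simp_all add: rshadow_iff[OF assms(1)])
  have "\<not> (\<exists>t\<in>T. reaches (V - out_boundary V E M v) E v t)"
    using reaches_Diff_out_boundary[of V E M v, OF _ v(1)] v(2) by blast
  moreover have "out_boundary V E M v \<subseteq> V - Vinf"
    using assms(2) out_boundary_subset[of V E M v] by blast
  ultimately show ?thesis by (simp add: is_separator_singleton_iff[OF assms(1)])
qed

lemma out_boundary_minimal:
  assumes "acyclic E" "thin V E T M" "M \<subseteq> V" "S \<subset> out_boundary V E M v"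
  shows "\<not> is_separator V E Vinf {v} T S"
proof -
  obtain w where w: "w \<in> out_boundary V E M v" "w \<notin> S" using assms(4) by blast
  then obtain u where u: "reaches (V - M) E v u" "(u, w) \<in> E" "w \<in> M"
    unfolding out_boundary_def by blast
  have SM: "S \<subseteq> M" using assms(4) out_boundary_subset[of V E M v] by blast
  obtain p where p: "is_path (V - (M - {w})) E p" "hd p = w" "last p \<in> T"
    using thin_escape_path[OF assms(2,3) u(3)] by blast
  have "reaches (V - S) E v u" using u(1) SM by (blast intro: reaches_mono)
  moreover have "reaches (V - S) E u w"
    using reaches_in(2)[OF calculation] u(2,3) w(2) assms(3) by (blast intro: reaches_edge)
  moreover have "reaches (V - S) E w (last p)"
  proof -
    have "hd p \<in> set p" using p(1) unfolding is_path_def by simp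
    then have "reaches (V - (M - {w})) E w (last p)" using path_reaches(2)[OF p(1)] p(2) by simp
    moreover have "V - (M - {w}) \<subseteq> V - S" using SM w(2) by blast
    ultimately show ?thesis by (blast intro: reaches_mono)
  qed
  ultimately have "reaches (V - S) E v (last p)" by (blast intro: reaches_trans)
  with p(3) show ?thesis by (auto simp: is_separator_singleton_iff[OF assms(1)])
qed

locale boundary_exchange =
  fixes V :: "'a set" and E :: "('a \<times> 'a) set" and Vinf T M :: "'a set"
    and v :: 'a and S :: "'a set"
  assumes dag: "is_dag V E"
    and min_solution: "is_min_solution V E Vinf T M"
    and separator: "is_separator V E Vinf {v} T S"
    and dominating: "dominates V E {v} S (out_boundary V E M v)"
begin

abbreviation boundary :: "'a set" where
  "boundary \<equiv> out_boundary V E M v"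

definition exchanged :: "'a set" where
  "exchanged = M - boundary \<union> S"

lemma acyclic_E: "acyclic E" and finite_V: "finite V"
  using dag unfolding is_dag_def by auto

lemma M_subset: "M \<subseteq> V - Vinf"
  using min_solution unfolding is_min_solution_def is_solution_def by blast

lemma S_subset: "S \<subseteq> V - Vinf" and v_not_reaches_T: "\<not> (\<exists>t\<in>T. reaches (V - S) E v t)"
  using separator unfolding is_separator_singleton_iff[OF acyclic_E] by auto

lemma boundary_subset: "boundary \<subseteq> M"
  by (rule out_boundary_subset)

lemma boundary_Diff_not_reaches_T:
  assumes "w \<in> boundary" "w \<notin> S" "t \<in> T"
  shows "\<not> reaches (V - S) E w t"
proof
  assume wt: "reaches (V - S) E w t"
  obtain u where u: "reaches (V - M) E v u" "(u, w) \<in> E" "w \<in> M"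
    using assms(1) unfolding out_boundary_def by blast
  have "V - M \<subseteq> V - boundary" using boundary_subset by blast
  then have "u \<in> reach (V - boundary) E {v}"
    using u(1) by (simp add: reach_iff[OF acyclic_E] reaches_mono)
  then have "u \<in> reach (V - S) E {v}" using dominating unfolding dominates_def by blast
  then have vu: "reaches (V - S) E v u" by (simp add: reach_iff[OF acyclic_E])
  have "w \<in> V - S" using u(3) M_subset assms(2) by blast
  then have "reaches (V - S) E u w" using reaches_in(2)[OF vu] u(2) by (simp add: reaches_edge)
  then have "reaches (V - S) E v t" using reaches_trans[OF reaches_trans[OF vu] wt] by blast
  with v_not_reaches_T assms(3) show False by blast
qed

lemma reaches_Diff_exchanged:
  assumes "reaches (V - exchanged) E a b" "reaches (V - exchanged) E b t" "t \<in> T"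
  shows "reaches (V - M) E a b"
proof (rule reaches_subgraph[OF acyclic_E assms(1)])
  fix z assume "reaches (V - exchanged) E a z" "reaches (V - exchanged) E z b"
  then have zt: "reaches (V - exchanged) E z t" using assms(2) by (blast intro: reaches_trans)
  show "z \<in> V - M"
  proof (rule ccontr)
    assume "z \<notin> V - M"
    then have "z \<in> boundary" "z \<notin> S" using reaches_in(1)[OF zt] unfolding exchanged_def by auto
    moreover have "V - exchanged \<subseteq> V - S" unfolding exchanged_def by blast
    ultimately show False
      using boundary_Diff_not_reaches_T assms(3) reaches_mono[OF _ zt] by blast
  qed
qed

lemma exchanged_solution: "is_solution V E Vinf T exchanged"
  unfolding is_solution_def
proof (intro conjI allI impI)
  show "exchanged \<subseteq> V - Vinf" using M_subset S_subset unfolding exchanged_def by blast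
  fix p assume p: "is_path V E p \<and> hd p \<in> T \<and> last p \<in> T \<and> odd (path_len p)"
  show "set p \<inter> exchanged \<noteq> {}"
  proof
    assume avoid: "set p \<inter> exchanged = {}"
    obtain w where w: "w \<in> set p" "w \<in> M"
      using min_solution p unfolding is_min_solution_def is_solution_def by blast
    then have w_boundary: "w \<in> boundary" "w \<notin> S" using avoid unfolding exchanged_def by auto
    have "set p \<subseteq> V - S" using p avoid unfolding is_path_def exchanged_def by blast
    then have "is_path (V - S) E p" using p is_path_mono by blast
    from path_reaches(2)[OF this w(1)] boundary_Diff_not_reaches_T[OF w_boundary] p
    show False by blast
  qed
qed

lemma card_exchanged_le: "card exchanged \<le> card M"
proof -
  have finite_M: "finite M" using M_subset finite_V by (blast intro: finite_subset)
  have "card exchanged \<le> card (M - boundary) + card S"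
    unfolding exchanged_def by (rule card_Un_le)
  also have "card (M - boundary) = card M - card boundary"
    using finite_M boundary_subset by (blast intro: card_Diff_subset finite_subset)
  finally show ?thesis
    using dominating card_mono[OF finite_M boundary_subset] unfolding dominates_def by linarith
qed

lemma exchanged_min_solution: "is_min_solution V E Vinf T exchanged"
  using exchanged_solution card_exchanged_le min_solution
  unfolding is_min_solution_def by (meson order_trans)

lemma shadows_subset:
  "rshadow V E T M \<union> fshadow V E T M \<union> M
     \<subseteq> rshadow V E T exchanged \<union> fshadow V E T exchanged \<union> exchanged"
proof
  fix x assume x: "x \<in> rshadow V E T M \<union> fshadow V E T M \<union> M"
  show "x \<in> rshadow V E T exchanged \<union> fshadow V E T exchanged \<union> exchanged"
  proof (rule ccontr)
    assume "x \<notin> rshadow V E T exchanged \<union> fshadow V E T exchanged \<union> exchanged"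
    moreover have "x \<in> V" using x M_subset unfolding rshadow_def fshadow_def by blast
    ultimately obtain t0 t where
      t0: "t0 \<in> T" "reaches (V - exchanged) E t0 x" and
      t: "t \<in> T" "reaches (V - exchanged) E x t"
      by (auto simp: rshadow_iff[OF acyclic_E] fshadow_iff[OF acyclic_E])
    have "reaches (V - M) E x t"
      using reaches_Diff_exchanged[OF t(2) reaches_refl[OF reaches_in(2)[OF t(2)]] t(1)] .
    moreover have "reaches (V - M) E t0 x" using reaches_Diff_exchanged[OF t0(2) t(2) t(1)] .
    ultimately show False
      using x t(1) t0(1) reaches_in(1)[of "V - M" E x t]
      by (auto simp: rshadow_iff[OF acyclic_E] fshadow_iff[OF acyclic_E])
  qed
qed

lemma card_shadows_le:
  "card (rshadow V E T M \<union> fshadow V E T M \<union> M)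
     \<le> card (rshadow V E T exchanged \<union> fshadow V E T exchanged \<union> exchanged)"
proof (rule card_mono[OF _ shadows_subset])
  have "exchanged \<subseteq> V" using exchanged_solution unfolding is_solution_def by blast
  then have "rshadow V E T exchanged \<union> fshadow V E T exchanged \<union> exchanged \<subseteq> V"
    unfolding rshadow_def fshadow_def by blast
  then show "finite (rshadow V E T exchanged \<union> fshadow V E T exchanged \<union> exchanged)"
    using finite_V by (rule finite_subset)
qed

lemma separator_meets_escape_path:
  assumes "a \<in> boundary" "a \<notin> S"
  shows "\<exists>y\<in>S. y \<notin> M \<and> y \<notin> rshadow V E T M"
proof -
  have a_M: "a \<in> M" using boundary_subset assms(1) by (rule subsetD)
  have "M \<subseteq> V" using M_subset by blast
  with min_solution_thin[OF finite_V min_solution] a_M obtain p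
    where p: "is_path (V - (M - {a})) E p" "hd p = a" "last p \<in> T"
    by (blast dest: thin_escape_path)
  have p_ne: "p \<noteq> []" and p_distinct: "distinct p" and p_set: "set p \<subseteq> V - (M - {a})"
    using p(1) unfolding is_path_def by auto
  have a_p: "a \<in> set p" using p(2) p_ne by auto
  have "\<not> set p \<subseteq> V - S"
  proof
    assume "set p \<subseteq> V - S"
    with p(1) have "is_path (V - S) E p" by (rule is_path_mono)
    from path_reaches(2)[OF this a_p] boundary_Diff_not_reaches_T[OF assms p(3)]
    show False by blast
  qed
  then obtain y where "y \<in> set p" "y \<in> S" using p_set by blast
  then obtain i where i: "i < length p" "p ! i \<in> S" by (auto simp: in_set_conv_nth)
  have "hd p = p ! 0" using p_ne by (simp add: hd_conv_nth)
  with i(2) assms(2) p(2) have "i \<noteq> 0" by (intro notI) simp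
  with p_ne have "hd (take i p) \<in> set (take i p)" by (intro hd_in_set) simp
  with \<open>i \<noteq> 0\<close> p(2) have "a \<in> set (take i p)" by simp
  then have "a \<notin> set (drop i p)"
    using set_take_disj_set_drop_if_distinct[OF p_distinct, of i i] by blast
  moreover have "set (drop i p) \<subseteq> V - (M - {a})" using p_set set_drop_subset[of i p] by blast
  ultimately have "is_path (V - M) E (drop i p)"
    using is_path_mono[OF is_path_drop(1)[OF p(1) i(1)]] by blast
  then have "\<exists>q. is_path (V - M) E q \<and> hd q = p ! i \<and> last q \<in> T"
    using is_path_drop(2,3)[OF p(1) i(1)] p(3) by (intro exI[of _ "drop i p"]) simp
  then have "p ! i \<notin> rshadow V E T M" unfolding rshadow_def by blast
  moreover have "p ! i \<notin> M" using i assms(2) p_set nth_mem[OF i(1)] by blast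
  ultimately show ?thesis using i(2) by blast
qed

lemma card_rshadow_less: "card (rshadow V E T M) < card (rshadow V E T exchanged)"
proof -
  define A B where "A = rshadow V E T M" and "B = rshadow V E T exchanged"
  have A_V: "A \<subseteq> V - M" and B_V: "B \<subseteq> V" unfolding A_def B_def rshadow_def by auto
  have "boundary \<subseteq> V" using boundary_subset M_subset by blast
  then have finite_A: "finite A" and finite_B: "finite B" and finite_S: "finite S"
    and finite_boundary: "finite boundary"
    using A_V B_V S_subset finite_V by (auto intro: finite_subset)
  have card_S: "card S \<le> card boundary" using dominating unfolding dominates_def by blast
  have "A - S \<subseteq> B"
  proof
    fix x assume x: "x \<in> A - S"
    have "\<not> reaches (V - exchanged) E x t" if t: "t \<in> T" for t
    proof
      assume xt: "reaches (V - exchanged) E x t"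
      have "reaches (V - M) E x t"
        using reaches_Diff_exchanged[OF xt reaches_refl[OF reaches_in(2)[OF xt]] t] .
      with x t show False by (auto simp: A_def rshadow_iff[OF acyclic_E])
    qed
    moreover have "x \<in> V - exchanged" using x A_V unfolding exchanged_def by blast
    ultimately show "x \<in> B" unfolding B_def rshadow_iff[OF acyclic_E] by blast
  qed
  moreover have "boundary - S \<subseteq> B"
  proof
    fix w assume w: "w \<in> boundary - S"
    have "\<not> reaches (V - exchanged) E w t" if t: "t \<in> T" for t
    proof
      assume "reaches (V - exchanged) E w t"
      then have "reaches (V - S) E w t" by (rule reaches_mono[rotated]) (auto simp: exchanged_def)
      with boundary_Diff_not_reaches_T[of w t] w t show False by blast
    qed
    moreover have "w \<in> V - exchanged"
      using w boundary_subset M_subset unfolding exchanged_def by blast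
    ultimately show "w \<in> B" unfolding B_def rshadow_iff[OF acyclic_E] by blast
  qed
  ultimately have "card ((A - S) \<union> (boundary - S)) \<le> card B"
    using finite_B by (intro card_mono) auto
  moreover have "card ((A - S) \<union> (boundary - S)) = card (A - S) + card (boundary - S)"
    using finite_A finite_boundary A_V boundary_subset by (intro card_Un_disjoint) auto
  moreover have "\<not> boundary \<subseteq> S"
  proof
    assume sub: "boundary \<subseteq> S"
    with card_S card_mono[OF finite_S sub] have "boundary = S"
      using card_subset_eq[OF finite_S sub] by simp
    then show False using dominating unfolding dominates_def by blast
  qed
  then obtain a where "a \<in> boundary" "a \<notin> S" by blast
  then obtain y where y: "y \<in> S" "y \<notin> M" "y \<notin> A"
    using separator_meets_escape_path unfolding A_def by blast
  have "insert y (A \<inter> S) \<subseteq> S - boundary" using y A_V boundary_subset by blast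
  then have "card (insert y (A \<inter> S)) \<le> card (S - boundary)"
    using finite_S by (intro card_mono) auto
  then have "card (A \<inter> S) + 1 \<le> card (S - boundary)"
    using finite_A y(3) by simp
  moreover have "card S = card (S \<inter> boundary) + card (S - boundary)"
    using finite_S by (rule card_Int_Diff)
  moreover have "card boundary = card (S \<inter> boundary) + card (boundary - S)"
    using card_Int_Diff[OF finite_boundary, of S] by (simp add: Int_commute)
  moreover have "card A = card (A \<inter> S) + card (A - S)"
    using finite_A by (rule card_Int_Diff)
  ultimately show ?thesis unfolding A_def B_def using card_S by linarith
qed

end

theorem corollary2p10:
  fixes V :: "'a set" and E :: "('a \<times> 'a) set" and Vinf T Mstar :: "'a set" and k :: nat
  assumes dag: "is_dag V E"
    and Vinf: "Vinf \<subseteq> V" and T: "T \<subseteq> Vinf" and k: "0 < k"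
    and min: "is_min_solution V E Vinf T Mstar"
    and max1: "\<forall>S. is_min_solution V E Vinf T S \<longrightarrow>
        card (rshadow V E T S \<union> fshadow V E T S \<union> S)
          \<le> card (rshadow V E T Mstar \<union> fshadow V E T Mstar \<union> Mstar)"
    and max2: "\<forall>S. is_min_solution V E Vinf T S \<and>
        card (rshadow V E T S \<union> fshadow V E T S \<union> S)
          = card (rshadow V E T Mstar \<union> fshadow V E T Mstar \<union> Mstar)
        \<longrightarrow> card (rshadow V E T S) \<le> card (rshadow V E T Mstar)"
  shows "thin V E T Mstar \<and>
    (\<forall>v \<in> rshadow V E T Mstar. \<exists>S. is_important_separator V E Vinf {v} T S \<and> S \<subseteq> Mstar)"
proof -
  have acyclic_E: "acyclic E" and "finite V" using dag unfolding is_dag_def by auto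
  have M_subset: "Mstar \<subseteq> V - Vinf"
    using min unfolding is_min_solution_def is_solution_def by blast
  then have "Mstar \<subseteq> V" by blast
  have thin: "thin V E T Mstar" using min_solution_thin[OF \<open>finite V\<close> min] .
  have "is_important_separator V E Vinf {v} T (out_boundary V E Mstar v)"
    if v: "v \<in> rshadow V E T Mstar" for v
    unfolding is_important_separator_def
  proof (intro conjI allI impI notI)
    show "is_separator V E Vinf {v} T (out_boundary V E Mstar v)"
      using out_boundary_separator[OF acyclic_E M_subset v] .
  next
    fix S assume "S \<subset> out_boundary V E Mstar v" "is_separator V E Vinf {v} T S"
    with out_boundary_minimal[OF acyclic_E thin \<open>Mstar \<subseteq> V\<close>] show False by blast
  next
    fix S assume "is_separator V E Vinf {v} T S" "dominates V E {v} S (out_boundary V E Mstar v)"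
    with dag min interpret boundary_exchange V E Vinf T Mstar v S
      by (rule boundary_exchange.intro)
    have "card (rshadow V E T exchanged \<union> fshadow V E T exchanged \<union> exchanged)
        = card (rshadow V E T Mstar \<union> fshadow V E T Mstar \<union> Mstar)"
      using max1 exchanged_min_solution card_shadows_le by (blast intro: le_antisym)
    with max2 exchanged_min_solution
    have "card (rshadow V E T exchanged) \<le> card (rshadow V E T Mstar)" by blast
    with card_rshadow_less show False by simp
  qed
  with thin out_boundary_subset[of V E Mstar] show ?thesis by blast
qed

end
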